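(* Assume the Perturbed Composite Setting (see context). Let $\beta\ge\rho$, $\gamma:=\rho/\beta$, suppose $\varepsilon<\frac{\mu^2\gamma}{56\rho}$, and let $x_0\in\mathcal{X}$ with $\frac{14\varepsilon}{\mu}<\mathrm{dist}(x_0,\mathcal{X}^* )<\frac{\gamma\mu}{4\rho}$. Define the prox-linear iterates on the perturbed problem $$x_{k+1}=\operatorname{argmin}_{x\in\mathcal{X}}\Big\{h\big(F(x_k)+e+\nabla F(x_k)(x-x_k)\big)+\frac\beta2\|x-x_k\|^2\Big\}.$$ Then for every $k\ge0$ with $\mathrm{dist}(x_{k+1},\mathcal{X}^* )\ge14\varepsilon/\mu$, $$\mathrm{dist}(x_{k+1},\mathcal{X}^* )\le\frac{7\beta}{6\mu}\mathrm{dist}^2(x_k,\mathcal{X}^* ).$$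
   Context: Perturbed Composite Setting: $\mathbf{E},\mathbf{Y}$ are Euclidean spaces ($\|\cdot\|$ the Euclidean norm on $\mathbf{E}$), $\mathcal{X}\subset\mathbf{E}$ nonempty closed convex, $F\colon\mathbf{E}\to\mathbf{Y}$ continuously differentiable with Jacobian $\nabla F(x)$, $h\colon\mathbf{Y}\to\mathbb{R}$ convex and $\eta$-Lipschitz with respect to a norm $|||\cdot|||$ on $\mathbf{Y}$. Set $f=h\circ F$, $f_x(y)=h(F(x)+\nabla F(x)(y-x))$, and assume $\mathcal{X}^*:=\operatorname{argmin}_{\mathcal{X}}f\ne\emptyset$ and constants $\mu,\rho>0$ with $|f(y)-f_x(y)|\le\frac\rho2\|y-x\|^2$ for all $x,y\in\mathcal{X}$ and $f(x)-\min_{\mathcal{X}}f\ge\mu\,\mathrm{dist}(x,\mathcal{X}^* )$ for all $x\in\mathcal{X}$. Fix $e\in\mathbf{Y}$ and set $\tilde f(x)=h(F(x)+e)$, $\varepsilon:=\eta|||e|||$. $\mathrm{dist}$ is the Euclidean distance. *)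

theory Defs
  imports "HOL-Analysis.Analysis"
begin

definition is_norm :: "('y::real_vector \<Rightarrow> real) \<Rightarrow> bool" where
  "is_norm N \<longleftrightarrow>
     (\<forall>u. 0 \<le> N u) \<and> (\<forall>u. N u = 0 \<longleftrightarrow> u = 0) \<and>
     (\<forall>c u. N (c *\<^sub>R u) = \<bar>c\<bar> * N u) \<and> (\<forall>u v. N (u + v) \<le> N u + N v)"

end

theory Submission
  imports Defs
begin

text \<open>Let \<open>x\<^sup>* \<in> X\<^sup>*\<close> be nearest to \<open>x\<^sub>k\<close> and \<open>d = dist(x\<^sub>k, X\<^sup>*)\<close>. Comparing the prox-linear
  objective at \<open>x\<^sub>k\<^sub>+\<^sub>1\<close> and at \<open>x\<^sup>*\<close>, using the two-sided model bound and the fact that the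
  perturbation \<open>e\<close> changes the model by at most \<open>\<epsilon>\<close>, gives
  \<open>f(x\<^sub>k\<^sub>+\<^sub>1) \<le> min f + \<beta> d\<^sup>2 + 2\<epsilon>\<close>. Sharpness turns this into
  \<open>\<mu> dist(x\<^sub>k\<^sub>+\<^sub>1, X\<^sup>*) \<le> \<beta> d\<^sup>2 + 2\<epsilon>\<close>, and when \<open>dist(x\<^sub>k\<^sub>+\<^sub>1, X\<^sup>*) \<ge> 14\<epsilon>/\<mu>\<close> the
  error term \<open>2\<epsilon>\<close> is absorbed at the cost of the factor \<open>7/6\<close>.
  The estimate is a single step.\<close>

lemma closed_minimizers_on:
  fixes f :: "'a::topological_space \<Rightarrow> 'b::linorder_topology"
  assumes "closed X" and "continuous_on UNIV f"
  shows "closed {z \<in> X. \<forall>y\<in>X. f z \<le> f y}"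
proof -
  have "{z \<in> X. \<forall>y\<in>X. f z \<le> f y} = X \<inter> (\<Inter>y\<in>X. {z. f z \<le> f y})"
    by auto
  moreover have "closed (\<Inter>y\<in>X. {z. f z \<le> f y})"
    using closed_Collect_le[OF assms(2) continuous_on_const] by (intro closed_INT) auto
  ultimately show ?thesis
    using assms(1) by auto
qed

lemma prox_step_value_le:
  fixes z xp y :: "'a::real_normed_vector"
  assumes model: "\<And>y. y \<in> X \<Longrightarrow> \<bar>f y - m y\<bar> \<le> \<rho> / 2 * (norm (y - z))\<^sup>2"
    and perturbed: "\<And>y. \<bar>m' y - m y\<bar> \<le> \<epsilon>"
    and prox_min: "\<And>y. y \<in> X \<Longrightarrow>
        m' xp + \<beta> / 2 * (norm (xp - z))\<^sup>2 \<le> m' y + \<beta> / 2 * (norm (y - z))\<^sup>2"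
    and "xp \<in> X" and "y \<in> X" and "\<rho> \<le> \<beta>"
  shows "f xp \<le> f y + \<beta> * (norm (y - z))\<^sup>2 + 2 * \<epsilon>"
proof -
  have "\<rho> / 2 * (norm (xp - z))\<^sup>2 \<le> \<beta> / 2 * (norm (xp - z))\<^sup>2"
    and "\<rho> / 2 * (norm (y - z))\<^sup>2 \<le> \<beta> / 2 * (norm (y - z))\<^sup>2"
    using \<open>\<rho> \<le> \<beta>\<close> by (intro mult_right_mono; simp)+
  then show ?thesis
    using model[OF \<open>xp \<in> X\<close>] model[OF \<open>y \<in> X\<close>] perturbed[of xp] perturbed[of y]
      prox_min[OF \<open>y \<in> X\<close>]
    unfolding abs_le_iff by linarith
qed

lemma sharp_error_absorption:
  fixes \<mu> \<beta> \<epsilon> D d :: real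
  assumes "0 < \<mu>" and "\<mu> * D \<le> \<beta> * d\<^sup>2 + 2 * \<epsilon>" and "14 * \<epsilon> / \<mu> \<le> D"
  shows "D \<le> 7 * \<beta> / (6 * \<mu>) * d\<^sup>2"
proof -
  have "2 * \<epsilon> \<le> \<mu> * D / 7"
    using assms(1,3) by (simp add: field_simps)
  then have "6 * \<mu> * D \<le> 7 * \<beta> * d\<^sup>2"
    using assms(2) by linarith
  then show ?thesis
    using assms(1) by (simp add: field_simps)
qed

theorem theorem9p7:
  fixes X :: "'e::euclidean_space set"
    and F :: "'e \<Rightarrow> 'y::euclidean_space"
    and F' :: "'e \<Rightarrow> ('e \<Rightarrow>\<^sub>L 'y)"
    and h :: "'y \<Rightarrow> real"
    and N :: "'y \<Rightarrow> real"
    and \<eta> \<mu> \<rho> \<beta> :: real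
    and e :: 'y
    and x :: "nat \<Rightarrow> 'e"
  defines "f \<equiv> (\<lambda>z. h (F z))"
    and "Xstar \<equiv> {z \<in> X. \<forall>y\<in>X. h (F z) \<le> h (F y)}"
    and "\<epsilon> \<equiv> \<eta> * N e"
    and "\<gamma> \<equiv> \<rho> / \<beta>"
  assumes X_ne: "X \<noteq> {}" and X_closed: "closed X" and X_convex: "convex X"
    and F_deriv: "\<And>z. (F has_derivative blinfun_apply (F' z)) (at z)"
    and F'_cont: "continuous_on UNIV F'"
    and h_convex: "convex_on UNIV h"
    and N_norm: "is_norm N"
    and eta_nonneg: "0 \<le> \<eta>"
    and h_lip: "\<And>u v. \<bar>h u - h v\<bar> \<le> \<eta> * N (u - v)"
    and Xstar_ne: "Xstar \<noteq> {}"
    and mu_pos: "0 < \<mu>" and rho_pos: "0 < \<rho>"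
    and model: "\<And>z y. z \<in> X \<Longrightarrow> y \<in> X \<Longrightarrow>
        \<bar>f y - h (F z + F' z (y - z))\<bar> \<le> \<rho> / 2 * (norm (y - z))\<^sup>2"
    and sharp: "\<And>z. z \<in> X \<Longrightarrow> f z - (INF y\<in>X. f y) \<ge> \<mu> * infdist z Xstar"
    and beta: "\<beta> \<ge> \<rho>"
    and eps_small: "\<epsilon> < \<mu>\<^sup>2 * \<gamma> / (56 * \<rho>)"
    and x0: "x 0 \<in> X"
    and x0_lo: "14 * \<epsilon> / \<mu> < infdist (x 0) Xstar"
    and x0_hi: "infdist (x 0) Xstar < \<gamma> * \<mu> / (4 * \<rho>)"
    and iter: "\<And>k. x (Suc k) \<in> X \<and>
        (\<forall>y\<in>X. h (F (x k) + e + F' (x k) (x (Suc k) - x k)) + \<beta> / 2 * (norm (x (Suc k) - x k))\<^sup>2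
               \<le> h (F (x k) + e + F' (x k) (y - x k)) + \<beta> / 2 * (norm (y - x k))\<^sup>2)"
  shows "\<forall>k. infdist (x (Suc k)) Xstar \<ge> 14 * \<epsilon> / \<mu> \<longrightarrow>
           infdist (x (Suc k)) Xstar \<le> 7 * \<beta> / (6 * \<mu>) * (infdist (x k) Xstar)\<^sup>2"
proof (intro allI impI)
  fix k
  assume far: "infdist (x (Suc k)) Xstar \<ge> 14 * \<epsilon> / \<mu>"
  have "continuous_on UNIV f"
    unfolding f_def using convex_on_continuous[OF open_UNIV h_convex] F_deriv
    by (metis continuous_on_compose2 has_derivative_continuous
        continuous_at_imp_continuous_on subset_UNIV)
  then have "closed Xstar"
    unfolding Xstar_def using closed_minimizers_on[OF X_closed, of f] by (simp add: f_def)
  then obtain xs where xs: "xs \<in> Xstar" "infdist (x k) Xstar = norm (xs - x k)"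
    using infdist_attains_inf[OF _ Xstar_ne] by (metis dist_norm norm_minus_commute)
  then have "xs \<in> X" and "(INF y\<in>X. f y) = f xs"
    unfolding Xstar_def f_def by (auto intro: cInf_eq_minimum)
  have "x (Suc k) \<in> X"
    using iter by blast
  have "x k \<in> X"
    using x0 iter by (cases k) auto
  have "f (x (Suc k)) \<le> f xs + \<beta> * (norm (xs - x k))\<^sup>2 + 2 * \<epsilon>"
  proof (rule prox_step_value_le[where X = X and m = "\<lambda>y. h (F (x k) + F' (x k) (y - x k))"
        and m' = "\<lambda>y. h (F (x k) + e + F' (x k) (y - x k))" and \<rho> = \<rho>])
    show "\<bar>h (F (x k) + e + F' (x k) (y - x k)) - h (F (x k) + F' (x k) (y - x k))\<bar> \<le> \<epsilon>" for y
      using h_lip[of "F (x k) + e + F' (x k) (y - x k)" "F (x k) + F' (x k) (y - x k)"]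
      unfolding \<epsilon>_def by simp
  qed (use model[OF \<open>x k \<in> X\<close>] iter \<open>xs \<in> X\<close> \<open>x (Suc k) \<in> X\<close> beta in auto)
  then have "\<mu> * infdist (x (Suc k)) Xstar \<le> \<beta> * (infdist (x k) Xstar)\<^sup>2 + 2 * \<epsilon>"
    using sharp[OF \<open>x (Suc k) \<in> X\<close>] \<open>(INF y\<in>X. f y) = f xs\<close>
    unfolding xs(2) by linarith
  then show "infdist (x (Suc k)) Xstar \<le> 7 * \<beta> / (6 * \<mu>) * (infdist (x k) Xstar)\<^sup>2"
    using sharp_error_absorption[OF mu_pos _ far] by blast
qed

end
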